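(* Let $q\ge3$ be an integer, $c\in\mathbb{R}$ and $\lambda\in(-1/q-c,-c)$ such that $f_c$ satisfies the pre-$q$-Sturmian condition for $\lambda$. Let $\theta=\lambda+1/q+c$. Then $\frac{3}{8q}<\theta<\frac{5}{8q}$.
   Context: $\mathbb{T}=\mathbb{R}/\mathbb{Z}$, $T(x)=qx\bmod1$. $f_c(x)=\log\left|\frac{\sin\pi q(x+c)}{\sin\pi(x+c)}\right|$. $C_\lambda=[\lambda,\lambda+1/q]\bmod1$. The function $f_c$ satisfies the pre-$q$-Sturmian condition for $\lambda$ if $f_c$ is Lipschitz on $C_\lambda$ and there exist a Lipschitz $\psi:\mathbb{T}\to\mathbb{R}$ and $\beta\in\mathbb{R}$ with $f_c(x)+\psi(x)-\psi(Tx)=\beta$ for all $x\in C_\lambda$. *)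

theory Defs
  imports Complex_Main
begin

text \<open>The circle T = R/Z is represented by 1-periodic data on the reals.
  Distance on the circle: distance to the nearest integer of the difference.\<close>
definition tdist :: "real \<Rightarrow> real \<Rightarrow> real" where
  "tdist x y = \<bar>(x - y) - of_int (round (x - y))\<bar>"

definition Tmap :: "nat \<Rightarrow> real \<Rightarrow> real" where
  "Tmap q x = frac (real q * x)"

text \<open>f_c(x) = log |sin(pi q (x+c)) / sin(pi (x+c))|, extended by continuity
  (value log q) at the removable singularities x + c in Z.\<close>
definition fc :: "nat \<Rightarrow> real \<Rightarrow> real \<Rightarrow> real" where
  "fc q c x = (if x + c \<in> \<int> then ln (real q)
     else ln \<bar>sin (pi * real q * (x + c)) / sin (pi * (x + c))\<bar>)"

text \<open>The arc C_lambda = [lambda, lambda + 1/q] mod 1, as a 1-periodic set of reals.\<close>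
definition Carc :: "nat \<Rightarrow> real \<Rightarrow> real set" where
  "Carc q lam = {x. \<exists>k::int. lam \<le> x - of_int k \<and> x - of_int k \<le> lam + 1 / real q}"

definition tlipschitz_on :: "real set \<Rightarrow> (real \<Rightarrow> real) \<Rightarrow> bool" where
  "tlipschitz_on S g \<longleftrightarrow> (\<exists>L. \<forall>x\<in>S. \<forall>y\<in>S. \<bar>g x - g y\<bar> \<le> L * tdist x y)"

definition pre_sturmian :: "nat \<Rightarrow> real \<Rightarrow> real \<Rightarrow> bool" where
  "pre_sturmian q c lam \<longleftrightarrow>
     tlipschitz_on (Carc q lam) (fc q c) \<and>
     (\<exists>(\<psi>::real \<Rightarrow> real) (\<beta>::real). tlipschitz_on UNIV \<psi> \<and>
        (\<forall>x\<in>Carc q lam. fc q c x + \<psi> x - \<psi> (Tmap q x) = \<beta>))"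

end

theory Submission
  imports Defs "HOL-Analysis.Complex_Transcendental"
begin

(* With y = x + c, the potential on C_lam is f_c x = log D (pi y), where
   D t = sin (q t) / sin t = sum_j cos ((q - 1 - 2 j) t) is the Dirichlet kernel, and
   L y = log D (pi y) is concave on (-1/q, 1/q) because D'' D - D'^2 = (D^2 - q^2) / sin^2 <= 0.
   In the coordinate w in [0, 1] of C_lam the cohomological equation reads
   Psi (r + w / q) = Psi w - G w + beta with Psi 1-periodic and Lipschitz.  Pulling [0, 1] back
   n times along w |-> r + w / q (mod 1) changes the increment of Psi by the increments of G:
   the first step contributes G 0 - G 1, concavity bounds the second, and the slope of G bounds
   all later ones, while the increment of Psi over intervals of total length q^-n is O(q^-n).
   With theta = lam + 1/q + c this forces
     L theta - L (theta - 1/q) <= L (theta - 1/q^2) - L theta - L' theta / (q^2 (q - 1)).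
   By concavity the left side decreases and the right side increases with theta, and explicit
   estimates of sin, cos and ln show that the inequality fails at theta = 3 / (8 q); hence
   theta > 3 / (8 q).  The reflection x |-> -x, c |-> -c replaces theta by 1/q - theta and
   gives theta < 5 / (8 q). *)

section \<open>The Dirichlet kernel\<close>

definition dirichlet :: "nat \<Rightarrow> real \<Rightarrow> real" where
  "dirichlet q x = (\<Sum>j<q. cos ((real q - 1 - 2 * real j) * x))"

definition dirichlet' :: "nat \<Rightarrow> real \<Rightarrow> real" where
  "dirichlet' q x = (\<Sum>j<q. - ((real q - 1 - 2 * real j) * sin ((real q - 1 - 2 * real j) * x)))"

definition dirichlet'' :: "nat \<Rightarrow> real \<Rightarrow> real" where
  "dirichlet'' q x =
     (\<Sum>j<q. - ((real q - 1 - 2 * real j)\<^sup>2 * cos ((real q - 1 - 2 * real j) * x)))"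

lemma dirichlet_has_derivative: "(dirichlet q has_real_derivative dirichlet' q x) (at x)"
  unfolding dirichlet_def dirichlet'_def
  by (rule DERIV_sum) (auto intro!: derivative_eq_intros)

lemma dirichlet'_has_derivative: "(dirichlet' q has_real_derivative dirichlet'' q x) (at x)"
  unfolding dirichlet'_def dirichlet''_def
  by (rule DERIV_sum) (auto intro!: derivative_eq_intros simp: power2_eq_square)

lemma dirichlet_mult_sin: "dirichlet q x * sin x = sin (real q * x)"
proof -
  define g where "g j = sin ((real q - 2 * real j) * x)" for j
  have telescope: "cos ((real q - 1 - 2 * real j) * x) * sin x = (g j - g (Suc j)) / 2" for j
  proof -
    have "cos ((real q - 1 - 2 * real j) * x) * sin x
        = (sin ((real q - 1 - 2 * real j) * x + x) - sin ((real q - 1 - 2 * real j) * x - x)) / 2"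
      by (simp add: sin_add sin_diff)
    also have "\<dots> = (g j - g (Suc j)) / 2"
      unfolding g_def by (simp add: algebra_simps)
    finally show ?thesis .
  qed
  have "dirichlet q x * sin x = (\<Sum>j<q. g j - g (Suc j)) / 2"
    unfolding dirichlet_def sum_distrib_right telescope by (simp add: sum_divide_distrib)
  also have "(\<Sum>j<q. g j - g (Suc j)) = g 0 - g q"
    by (rule sum_lessThan_telescope')
  finally show ?thesis
    by (simp add: g_def)
qed

lemma dirichlet_0 [simp]: "dirichlet q 0 = real q"
  by (simp add: dirichlet_def)

lemma dirichlet'_0 [simp]: "dirichlet' q 0 = 0"
  by (simp add: dirichlet'_def)

lemma dirichlet_minus [simp]: "dirichlet q (- x) = dirichlet q x"
  by (simp add: dirichlet_def)

lemma abs_dirichlet_le: "\<bar>dirichlet q x\<bar> \<le> real q"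
proof -
  have "\<bar>dirichlet q x\<bar> \<le> (\<Sum>j<q. \<bar>cos ((real q - 1 - 2 * real j) * x)\<bar>)"
    unfolding dirichlet_def by (rule sum_abs)
  also have "\<dots> \<le> (\<Sum>j<q. 1)"
    by (rule sum_mono) simp
  finally show ?thesis by simp
qed

lemma dirichlet'_identity: "dirichlet' q x * sin x + dirichlet q x * cos x = real q * cos (real q * x)"
proof -
  have "((\<lambda>x. dirichlet q x * sin x) has_real_derivative
      dirichlet' q x * sin x + dirichlet q x * cos x) (at x)"
    by (auto intro!: derivative_eq_intros dirichlet_has_derivative)
  moreover have "((\<lambda>x. sin (real q * x)) has_real_derivative real q * cos (real q * x)) (at x)"
    by (auto intro!: derivative_eq_intros)
  ultimately show ?thesis
    unfolding dirichlet_mult_sin using DERIV_unique by blast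
qed

lemma dirichlet''_identity:
  "dirichlet'' q x * sin x + 2 * dirichlet' q x * cos x - dirichlet q x * sin x
     = - (real q)\<^sup>2 * sin (real q * x)"
proof -
  have "((\<lambda>x. dirichlet' q x * sin x + dirichlet q x * cos x) has_real_derivative
      dirichlet'' q x * sin x + 2 * dirichlet' q x * cos x - dirichlet q x * sin x) (at x)"
    by (auto intro!: derivative_eq_intros dirichlet_has_derivative dirichlet'_has_derivative
        simp: algebra_simps)
  moreover have "((\<lambda>x. real q * cos (real q * x)) has_real_derivative
      - (real q)\<^sup>2 * sin (real q * x)) (at x)"
    by (auto intro!: derivative_eq_intros simp: power2_eq_square)
  ultimately show ?thesis
    unfolding dirichlet'_identity using DERIV_unique by blast
qed

lemma dirichlet_log_concavity_numerator:
  assumes "sin x \<noteq> 0"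
  shows "dirichlet'' q x * dirichlet q x - (dirichlet' q x)\<^sup>2
           = ((dirichlet q x)\<^sup>2 - (real q)\<^sup>2) / (sin x)\<^sup>2"
proof -
  define D D' D'' Q s c S C where "D = dirichlet q x" and "D' = dirichlet' q x"
    and "D'' = dirichlet'' q x" and "Q = real q" and "s = sin x" and "c = cos x"
    and "S = sin (real q * x)" and "C = cos (real q * x)"
  have "S = D * s"
    and "D' * s + D * c = Q * C"
    and "D'' * s + 2 * D' * c - D * s = - Q\<^sup>2 * S"
    unfolding D_def D'_def D''_def Q_def s_def c_def S_def C_def
    by (fact dirichlet_mult_sin[symmetric] dirichlet'_identity dirichlet''_identity)+
  moreover have "s\<^sup>2 + c\<^sup>2 = 1" "S\<^sup>2 + C\<^sup>2 = 1"
    unfolding s_def c_def S_def C_def by simp_all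
  ultimately have "s\<^sup>2 * (D'' * D - D'\<^sup>2) = D\<^sup>2 - Q\<^sup>2"
    by algebra
  with assms show ?thesis
    unfolding D_def D'_def D''_def Q_def s_def by (simp add: field_simps)
qed

lemma dirichlet_pos:
  assumes "q \<ge> 1" "\<bar>x\<bar> < pi / real q"
  shows "dirichlet q x > 0"
proof -
  have pos: "dirichlet q x > 0" if "0 < x" "x < pi / real q" for x
  proof -
    have "real q * x < pi"
      using that assms(1) by (simp add: pos_less_divide_eq mult.commute)
    moreover have "x \<le> real q * x"
      using that assms(1) by simp
    ultimately have "x < pi"
      by linarith
    with \<open>real q * x < pi\<close> have "sin x > 0" "sin (real q * x) > 0"
      using that assms(1) by (simp_all add: sin_gt_zero)
    then show ?thesis
      using dirichlet_mult_sin[of q x] by (metis zero_less_mult_pos2)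
  qed
  consider "x = 0" | "x > 0" | "x < 0" by linarith
  then show ?thesis
    using pos[of x] pos[of "- x"] assms by cases auto
qed

section \<open>Increments of functions with monotone derivative\<close>

lemma increment_ge_of_deriv_ge:
  fixes f f' :: "real \<Rightarrow> real"
  assumes "a \<le> b"
    and "\<And>t. a \<le> t \<Longrightarrow> t \<le> b \<Longrightarrow> (f has_real_derivative f' t) (at t)"
    and "\<And>t. a \<le> t \<Longrightarrow> t \<le> b \<Longrightarrow> m \<le> f' t"
  shows "m * (b - a) \<le> f b - f a"
proof -
  have "(\<lambda>t. f t - m * t) a \<le> (\<lambda>t. f t - m * t) b"
  proof (rule DERIV_nonneg_imp_nondecreasing[OF assms(1)])
    fix t assume "a \<le> t" "t \<le> b"
    with assms(2,3) show "\<exists>y. ((\<lambda>t. f t - m * t) has_real_derivative y) (at t) \<and> 0 \<le> y"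
      by (intro exI[of _ "f' t - m"]) (auto intro!: derivative_eq_intros)
  qed
  then show ?thesis
    by (simp add: algebra_simps)
qed

lemma increment_antimono_of_deriv_antimono:
  fixes f f' :: "real \<Rightarrow> real"
  assumes "a \<le> b" "0 \<le> d"
    and "\<And>t. a \<le> t \<Longrightarrow> t \<le> b + d \<Longrightarrow> (f has_real_derivative f' t) (at t)"
    and "\<And>s t. a \<le> s \<Longrightarrow> s \<le> t \<Longrightarrow> t \<le> b + d \<Longrightarrow> f' t \<le> f' s"
  shows "f (b + d) - f b \<le> f (a + d) - f a"
proof -
  have "(\<lambda>t. f t - f (t + d)) a \<le> (\<lambda>t. f t - f (t + d)) b"
  proof (rule DERIV_nonneg_imp_nondecreasing[OF assms(1)])
    fix t assume t: "a \<le> t" "t \<le> b"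
    have "((\<lambda>t. f (t + d)) has_real_derivative f' (t + d) * 1) (at t)"
      by (rule DERIV_chain2[where g = "\<lambda>t. t + d", OF assms(3)])
        (use t assms(2) in \<open>auto intro!: derivative_eq_intros\<close>)
    with t assms show "\<exists>y. ((\<lambda>t. f t - f (t + d)) has_real_derivative y) (at t) \<and> 0 \<le> y"
      by (intro exI[of _ "f' t - f' (t + d)"]) (auto intro!: derivative_eq_intros)
  qed
  then show ?thesis
    by simp
qed

section \<open>The logarithm of the Dirichlet kernel\<close>

definition log_dirichlet :: "nat \<Rightarrow> real \<Rightarrow> real" where
  "log_dirichlet q y = ln (dirichlet q (pi * y))"

definition log_dirichlet' :: "nat \<Rightarrow> real \<Rightarrow> real" where
  "log_dirichlet' q y = pi * dirichlet' q (pi * y) / dirichlet q (pi * y)"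

definition log_dirichlet'' :: "nat \<Rightarrow> real \<Rightarrow> real" where
  "log_dirichlet'' q y =
     pi\<^sup>2 * (dirichlet'' q (pi * y) * dirichlet q (pi * y) - (dirichlet' q (pi * y))\<^sup>2)
       / (dirichlet q (pi * y))\<^sup>2"

lemma dirichlet_pi_pos:
  assumes "q \<ge> 1" "\<bar>y\<bar> < 1 / real q"
  shows "dirichlet q (pi * y) > 0"
proof -
  have "\<bar>pi * y\<bar> = pi * \<bar>y\<bar>"
    by (simp add: abs_mult)
  also have "\<dots> < pi * (1 / real q)"
    using assms(2) by (intro mult_strict_left_mono) auto
  finally show ?thesis
    using assms(1) by (intro dirichlet_pos) auto
qed

lemma log_dirichlet_has_derivative:
  assumes "q \<ge> 1" "\<bar>y\<bar> < 1 / real q"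
  shows "(log_dirichlet q has_real_derivative log_dirichlet' q y) (at y)"
proof -
  have "((\<lambda>y. ln (dirichlet q (pi * y))) has_real_derivative
      1 / dirichlet q (pi * y) * (dirichlet' q (pi * y) * pi)) (at y)"
    using dirichlet_pi_pos[OF assms]
    by (auto intro!: derivative_eq_intros DERIV_chain2[OF dirichlet_has_derivative])
  then show ?thesis
    unfolding log_dirichlet_def[abs_def] log_dirichlet'_def by (simp add: field_simps)
qed

lemma log_dirichlet'_has_derivative:
  assumes "q \<ge> 1" "\<bar>y\<bar> < 1 / real q"
  shows "(log_dirichlet' q has_real_derivative log_dirichlet'' q y) (at y)"
proof -
  have "((\<lambda>y. pi * dirichlet' q (pi * y) / dirichlet q (pi * y)) has_real_derivative
      (pi * (dirichlet'' q (pi * y) * pi) * dirichlet q (pi * y)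
        - pi * dirichlet' q (pi * y) * (dirichlet' q (pi * y) * pi))
      / (dirichlet q (pi * y) * dirichlet q (pi * y))) (at y)"
    using dirichlet_pi_pos[OF assms]
    by (auto intro!: derivative_eq_intros DERIV_chain2[OF dirichlet_has_derivative]
        DERIV_chain2[OF dirichlet'_has_derivative])
  then show ?thesis
    unfolding log_dirichlet'_def[abs_def] log_dirichlet''_def by (simp add: field_simps power2_eq_square)
qed

lemma log_dirichlet''_nonpos:
  assumes "q \<ge> 1" "\<bar>y\<bar> < 1 / real q"
  shows "log_dirichlet'' q y \<le> 0"
proof (cases "y = 0")
  case True
  have "dirichlet'' q 0 \<le> 0"
    unfolding dirichlet''_def by (intro sum_nonpos) simp
  with True show ?thesis
    unfolding log_dirichlet''_def
    by (simp add: divide_nonpos_nonneg mult_nonneg_nonpos mult_nonpos_nonneg)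
next
  case False
  have "1 / real q \<le> 1"
    using assms(1) by simp
  with assms(2) have "\<bar>y\<bar> < 1"
    by linarith
  with False have "sin (pi * y) \<noteq> 0"
    by (auto simp: sin_zero_iff_int2)
  moreover have "(dirichlet q (pi * y))\<^sup>2 \<le> (real q)\<^sup>2"
    using abs_dirichlet_le[of q "pi * y"] by (metis abs_le_square_iff abs_of_nat)
  ultimately have "dirichlet'' q (pi * y) * dirichlet q (pi * y) - (dirichlet' q (pi * y))\<^sup>2 \<le> 0"
    by (simp add: dirichlet_log_concavity_numerator divide_nonpos_nonneg)
  then show ?thesis
    unfolding log_dirichlet''_def by (simp add: divide_nonpos_nonneg mult_nonneg_nonpos)
qed

lemma log_dirichlet'_antimono:
  assumes "q \<ge> 1" "- 1 / real q < y" "y \<le> x" "x < 1 / real q"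
  shows "log_dirichlet' q x \<le> log_dirichlet' q y"
  using assms(3)
proof (rule DERIV_nonpos_imp_nonincreasing)
  fix t assume "y \<le> t" "t \<le> x"
  with assms have "\<bar>t\<bar> < 1 / real q"
    by auto
  with assms(1) show "\<exists>d. (log_dirichlet' q has_real_derivative d) (at t) \<and> d \<le> 0"
    using log_dirichlet'_has_derivative log_dirichlet''_nonpos by blast
qed

lemma log_dirichlet_increment_antimono:
  assumes "q \<ge> 1" "- 1 / real q < a" "a \<le> b" "0 \<le> d" "b + d < 1 / real q"
  shows "log_dirichlet q (b + d) - log_dirichlet q b \<le> log_dirichlet q (a + d) - log_dirichlet q a"
  using assms(3,4)
proof (rule increment_antimono_of_deriv_antimono)
  fix t assume "a \<le> t" "t \<le> b + d"
  with assms show "(log_dirichlet q has_real_derivative log_dirichlet' q t) (at t)"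
    by (intro log_dirichlet_has_derivative) auto
next
  fix s t assume "a \<le> s" "s \<le> t" "t \<le> b + d"
  with assms show "log_dirichlet' q t \<le> log_dirichlet' q s"
    by (intro log_dirichlet'_antimono) auto
qed

lemma fc_eq_log_dirichlet:
  assumes "q \<ge> 1" "\<bar>x + c\<bar> < 1 / real q"
  shows "fc q c x = log_dirichlet q (x + c)"
proof -
  have "1 / real q \<le> 1"
    using assms(1) by simp
  with assms(2) have "\<bar>x + c\<bar> < 1"
    by linarith
  then have int_iff: "x + c \<in> \<int> \<longleftrightarrow> x + c = 0"
    by (auto elim!: Ints_cases)
  show ?thesis
  proof (cases "x + c = 0")
    case True
    then show ?thesis
      unfolding fc_def log_dirichlet_def by simp
  next
    case False
    then have "sin (pi * (x + c)) \<noteq> 0"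
      using int_iff by (auto simp: sin_zero_iff_int2)
    then have "sin (pi * real q * (x + c)) / sin (pi * (x + c)) = dirichlet q (pi * (x + c))"
      using dirichlet_mult_sin[of q "pi * (x + c)"] by (simp add: field_simps)
    with False int_iff dirichlet_pi_pos[OF assms] show ?thesis
      unfolding fc_def log_dirichlet_def by simp
  qed
qed

lemma fc_reflect: "fc q (- c) (- x) = fc q c x"
proof -
  have "- x + - c \<in> \<int> \<longleftrightarrow> x + c \<in> \<int>"
    by (metis minus_add_distrib minus_in_Ints_iff)
  moreover have "pi * real q * (- x + - c) = - (pi * real q * (x + c))"
    "pi * (- x + - c) = - (pi * (x + c))"
    by (simp_all add: algebra_simps)
  ultimately show ?thesis
    unfolding fc_def by simp
qed

section \<open>Pulling intervals back along an inverse branch\<close>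

(* The image of [a, b] under w |-> r + w / Q, reduced modulo 1 and cut at 1 into subintervals
   of [0, 1]. *)
definition branch_pieces :: "real \<Rightarrow> real \<Rightarrow> real \<times> real \<Rightarrow> (real \<times> real) list" where
  "branch_pieces r Q ab = (let A = r + fst ab / Q; B = r + snd ab / Q in
     if B \<le> 1 then [(A, B)] else if 1 \<le> A then [(A - 1, B - 1)] else [(A, 1), (0, B - 1)])"

definition branch_image :: "real \<Rightarrow> real \<Rightarrow> (real \<times> real) list \<Rightarrow> (real \<times> real) list" where
  "branch_image r Q P = concat (map (branch_pieces r Q) P)"

definition increment_sum :: "(real \<Rightarrow> real) \<Rightarrow> (real \<times> real) list \<Rightarrow> real" where
  "increment_sum H P = (\<Sum>ab\<leftarrow>P. H (snd ab) - H (fst ab))"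

definition total_length :: "(real \<times> real) list \<Rightarrow> real" where
  "total_length P = (\<Sum>ab\<leftarrow>P. snd ab - fst ab)"

definition unit_intervals :: "(real \<times> real) list \<Rightarrow> bool" where
  "unit_intervals P \<longleftrightarrow> (\<forall>ab\<in>set P. 0 \<le> fst ab \<and> fst ab \<le> snd ab \<and> snd ab \<le> 1)"

lemma increment_sum_simps [simp]:
  "increment_sum H [] = 0"
  "increment_sum H (ab # P) = H (snd ab) - H (fst ab) + increment_sum H P"
  "increment_sum H (P @ R) = increment_sum H P + increment_sum H R"
  by (simp_all add: increment_sum_def)

lemma total_length_simps [simp]:
  "total_length [] = 0"
  "total_length (ab # P) = snd ab - fst ab + total_length P"
  "total_length (P @ R) = total_length P + total_length R"
  by (simp_all add: total_length_def)

lemma unit_intervals_simps [simp]: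
  "unit_intervals []"
  "unit_intervals (ab # P) \<longleftrightarrow> 0 \<le> fst ab \<and> fst ab \<le> snd ab \<and> snd ab \<le> 1 \<and> unit_intervals P"
  "unit_intervals (P @ R) \<longleftrightarrow> unit_intervals P \<and> unit_intervals R"
  by (auto simp: unit_intervals_def)

lemma branch_image_simps [simp]:
  "branch_image r Q [] = []"
  "branch_image r Q (ab # P) = branch_pieces r Q ab @ branch_image r Q P"
  by (simp_all add: branch_image_def)

lemma unit_intervals_branch_pieces:
  assumes "0 \<le> r" "r < 1" "Q \<ge> 1" "0 \<le> a" "a \<le> b" "b \<le> 1"
  shows "unit_intervals (branch_pieces r Q (a, b))"
proof -
  have "0 \<le> a / Q" "a / Q \<le> b / Q" "b / Q \<le> 1"
    using assms by (auto simp: divide_right_mono)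
  then have "r + b / Q \<le> 2"
    using assms by linarith
  with assms \<open>0 \<le> a / Q\<close> \<open>a / Q \<le> b / Q\<close> show ?thesis
    unfolding branch_pieces_def Let_def by auto
qed

lemma unit_intervals_branch_image:
  assumes "0 \<le> r" "r < 1" "Q \<ge> 1" "unit_intervals P"
  shows "unit_intervals (branch_image r Q P)"
  using assms(4) by (induction P) (auto intro!: unit_intervals_branch_pieces[OF assms(1-3)])

lemma total_length_branch_image:
  assumes "Q > 0"
  shows "total_length (branch_image r Q P) = total_length P / Q"
proof (induction P)
  case (Cons ab P)
  have "total_length (branch_pieces r Q ab) = (snd ab - fst ab) / Q"
    unfolding branch_pieces_def Let_def by (auto simp: diff_divide_distrib)
  with Cons show ?case
    by (simp add: add_divide_distrib)
qed simp

lemma total_length_branch_image_iterate: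
  assumes "Q > 0"
  shows "total_length ((branch_image r Q ^^ n) P) = total_length P / Q ^ n"
  by (induction n) (simp_all add: total_length_branch_image[OF assms] field_simps)

lemma increment_sum_branch_image:
  assumes per: "\<And>x. H (x + 1) = H x"
  shows "increment_sum H (branch_image r Q P) = (\<Sum>ab\<leftarrow>P. H (r + snd ab / Q) - H (r + fst ab / Q))"
proof (induction P)
  case (Cons ab P)
  have "H 1 = H 0" "\<And>x. H (x - 1) = H x"
    using per[of 0] per[of "_ - 1"] by simp_all
  then have "increment_sum H (branch_pieces r Q ab) = H (r + snd ab / Q) - H (r + fst ab / Q)"
    unfolding branch_pieces_def Let_def by auto
  with Cons show ?case
    by simp
qed simp

lemma increment_sum_lower_bound:
  assumes "\<And>a b. 0 \<le> a \<Longrightarrow> a \<le> b \<Longrightarrow> b \<le> 1 \<Longrightarrow> - K * (b - a) \<le> H b - H a"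
    and "unit_intervals P"
  shows "- K * total_length P \<le> increment_sum H P"
  using assms(2)
proof (induction P)
  case (Cons ab P)
  then have "- K * (snd ab - fst ab) \<le> H (snd ab) - H (fst ab)"
    using assms(1) by simp
  with Cons show ?case
    by (simp add: algebra_simps)
qed simp

lemma unit_intervals_branch_image_iterate:
  assumes "0 \<le> r" "r < 1" "Q \<ge> 1" "unit_intervals P"
  shows "unit_intervals ((branch_image r Q ^^ n) P)"
  by (induction n) (simp_all add: assms unit_intervals_branch_image)

lemma increment_sum_branch_image_transfer:
  assumes per: "\<And>x. Psi (x + 1) = Psi x"
    and eq: "\<And>w. 0 \<le> w \<Longrightarrow> w \<le> 1 \<Longrightarrow> Psi (r + w / Q) = Psi w - G w + beta"
    and "unit_intervals P"
  shows "increment_sum Psi (branch_image r Q P) = increment_sum Psi P - increment_sum G P"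
proof -
  have "increment_sum Psi (branch_image r Q P) = (\<Sum>ab\<leftarrow>P. Psi (r + snd ab / Q) - Psi (r + fst ab / Q))"
    using per by (rule increment_sum_branch_image)
  also have "\<dots> = (\<Sum>ab\<leftarrow>P. (Psi (snd ab) - Psi (fst ab)) - (G (snd ab) - G (fst ab)))"
    using assms(3) unfolding unit_intervals_def
    by (intro arg_cong[where f = sum_list] map_cong) (auto simp: eq)
  also have "\<dots> = increment_sum Psi P - increment_sum G P"
    unfolding increment_sum_def by (simp add: sum_list_subtractf)
  finally show ?thesis .
qed

(* The weight K Q / (Q - 1) of the length is chosen so that the loss K * length allowed by the
   slope bound in one step is exactly paid for by the shrinking of the length by the factor Q. *)
lemma increment_sum_branch_image_iterate:
  fixes Psi G :: "real \<Rightarrow> real" and r Q :: real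
  assumes Q: "Q > 1" and r: "0 \<le> r" "r < 1"
    and per: "\<And>x. Psi (x + 1) = Psi x"
    and eq: "\<And>w. 0 \<le> w \<Longrightarrow> w \<le> 1 \<Longrightarrow> Psi (r + w / Q) = Psi w - G w + beta"
    and slope: "\<And>a b. 0 \<le> a \<Longrightarrow> a \<le> b \<Longrightarrow> b \<le> 1 \<Longrightarrow> - K * (b - a) \<le> G b - G a"
    and P: "unit_intervals P"
  shows "increment_sum Psi ((branch_image r Q ^^ n) P)
           + K * Q / (Q - 1) * total_length ((branch_image r Q ^^ n) P)
         \<le> increment_sum Psi P + K * Q / (Q - 1) * total_length P"
proof (induction n)
  case (Suc n)
  define R where "R = (branch_image r Q ^^ n) P"
  have R: "unit_intervals R"
    unfolding R_def using Q r P by (intro unit_intervals_branch_image_iterate) auto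
  have "- K * total_length R \<le> increment_sum G R"
    by (rule increment_sum_lower_bound[OF slope R])
  moreover have "K * Q / (Q - 1) * (total_length R / Q) + K * total_length R
      = K * Q / (Q - 1) * total_length R"
    using Q by (simp add: field_simps)
  ultimately show ?case
    using Suc.IH increment_sum_branch_image_transfer[where Psi = Psi and G = G, OF per eq R]
      total_length_branch_image[of Q r R] Q
    unfolding R_def by simp
qed simp

lemma neg_increment_sum_first_branch_image:
  fixes G :: "real \<Rightarrow> real" and r Q :: real
  assumes Q: "Q > 1" and r: "0 \<le> r" "r < 1"
    and concave: "\<And>a b d. 0 \<le> a \<Longrightarrow> a \<le> b \<Longrightarrow> 0 \<le> d \<Longrightarrow> b + d \<le> 1 \<Longrightarrow>
      G (b + d) - G b \<le> G (a + d) - G a"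
  shows "- increment_sum G (branch_image r Q [(0, 1)]) \<le> G (1 - 1 / Q) - G 1"
proof (cases "r + 1 / Q \<le> 1")
  case True
  then have "branch_image r Q [(0, 1)] = [(r, r + 1 / Q)]"
    by (simp add: branch_pieces_def)
  moreover have "G (1 - 1 / Q + 1 / Q) - G (1 - 1 / Q) \<le> G (r + 1 / Q) - G r"
    using concave[of r "1 - 1 / Q" "1 / Q"] r Q True by simp
  ultimately show ?thesis
    by simp
next
  case False
  then have "branch_image r Q [(0, 1)] = [(r, 1), (0, r + 1 / Q - 1)]"
    using r by (simp add: branch_pieces_def)
  moreover have "G (1 - 1 / Q + (r + 1 / Q - 1)) - G (1 - 1 / Q) \<le> G (0 + (r + 1 / Q - 1)) - G 0"
    using concave[of 0 "1 - 1 / Q" "r + 1 / Q - 1"] r Q False by simp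
  ultimately show ?thesis
    by simp
qed

lemma increment_sum_second_branch_image:
  fixes Psi G :: "real \<Rightarrow> real" and r Q :: real
  assumes Q: "Q > 1" and r: "0 \<le> r" "r < 1"
    and per: "\<And>x. Psi (x + 1) = Psi x"
    and eq: "\<And>w. 0 \<le> w \<Longrightarrow> w \<le> 1 \<Longrightarrow> Psi (r + w / Q) = Psi w - G w + beta"
    and concave: "\<And>a b d. 0 \<le> a \<Longrightarrow> a \<le> b \<Longrightarrow> 0 \<le> d \<Longrightarrow> b + d \<le> 1 \<Longrightarrow>
      G (b + d) - G b \<le> G (a + d) - G a"
  shows "increment_sum Psi ((branch_image r Q ^^ 2) [(0, 1)]) \<le> G (1 - 1 / Q) - G 1 - (G 1 - G 0)"
proof -
  define P1 where "P1 = branch_image r Q [(0, 1)]"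
  have P1: "unit_intervals P1"
    unfolding P1_def using Q r by (intro unit_intervals_branch_image) auto
  have "increment_sum Psi P1 = - (G 1 - G 0)"
    unfolding P1_def
    using increment_sum_branch_image_transfer[where Psi = Psi and G = G, OF per eq, of "[(0, 1)]"] per[of 0]
    by simp
  then show ?thesis
    using increment_sum_branch_image_transfer[where Psi = Psi and G = G, OF per eq P1]
      neg_increment_sum_first_branch_image[where G = G, OF Q r concave]
    unfolding P1_def by (simp add: numeral_2_eq_2)
qed

lemma coboundary_increment_bound:
  fixes Psi G :: "real \<Rightarrow> real" and r Q :: real
  assumes Q: "Q > 1" and r: "0 \<le> r" "r < 1"
    and per: "\<And>x. Psi (x + 1) = Psi x"
    and lip: "\<And>x y. \<bar>Psi x - Psi y\<bar> \<le> M * \<bar>x - y\<bar>"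
    and eq: "\<And>w. 0 \<le> w \<Longrightarrow> w \<le> 1 \<Longrightarrow> Psi (r + w / Q) = Psi w - G w + beta"
    and slope: "\<And>a b. 0 \<le> a \<Longrightarrow> a \<le> b \<Longrightarrow> b \<le> 1 \<Longrightarrow> - K * (b - a) \<le> G b - G a"
    and concave: "\<And>a b d. 0 \<le> a \<Longrightarrow> a \<le> b \<Longrightarrow> 0 \<le> d \<Longrightarrow> b + d \<le> 1 \<Longrightarrow>
      G (b + d) - G b \<le> G (a + d) - G a"
  shows "G 1 - G 0 \<le> G (1 - 1 / Q) - G 1 + K / (Q * (Q - 1))"
proof -
  define P where "P = (branch_image r Q ^^ 2) [(0, 1)]"
  define c where "c = K * Q / (Q - 1)"
  define bound where "bound = G (1 - 1 / Q) - G 1 + K / (Q * (Q - 1))"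
  have P: "unit_intervals P"
    unfolding P_def using Q r by (intro unit_intervals_branch_image_iterate) auto
  have P_length: "total_length P = 1 / Q\<^sup>2"
    unfolding P_def using Q by (simp add: total_length_branch_image_iterate)
  have "G 1 - G 0 \<le> bound + (M - c) / Q\<^sup>2 / Q ^ n" for n
  proof -
    define L where "L = total_length ((branch_image r Q ^^ n) P)"
    have "- M * (b - a) \<le> Psi b - Psi a" if "a \<le> b" for a b
      using lip[of b a] that by (simp add: abs_le_iff)
    then have "- M * L \<le> increment_sum Psi ((branch_image r Q ^^ n) P)"
      unfolding L_def using Q r P by (intro increment_sum_lower_bound unit_intervals_branch_image_iterate) auto
    moreover have "increment_sum Psi ((branch_image r Q ^^ n) P) + c * L \<le> increment_sum Psi P + c * (1 / Q\<^sup>2)"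
      using increment_sum_branch_image_iterate[where Psi = Psi and G = G, OF Q r per eq slope P, of n]
      unfolding L_def P_length c_def by simp
    moreover have "c * (1 / Q\<^sup>2) = K / (Q * (Q - 1))"
      unfolding c_def using Q by (simp add: field_simps power2_eq_square)
    moreover have "(M - c) / Q\<^sup>2 / Q ^ n = M * L - c * L"
      unfolding L_def using Q by (simp add: total_length_branch_image_iterate P_length field_simps)
    ultimately show ?thesis
      using increment_sum_second_branch_image[where Psi = Psi and G = G, OF Q r per eq concave]
      unfolding bound_def P_def by linarith
  qed
  moreover have "(\<lambda>n. bound + (M - c) / Q\<^sup>2 / Q ^ n) \<longlonglongrightarrow> bound"
    using tendsto_add[OF tendsto_const LIMSEQ_divide_realpow_zero[OF Q, of "(M - c) / Q\<^sup>2"]]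
    by simp
  ultimately show ?thesis
    unfolding bound_def by (intro LIMSEQ_le_const) auto
qed

section \<open>Numerical estimates\<close>

lemma sin_taylor_bounds:
  fixes x :: real
  shows "x - x ^ 3 / 6 - \<bar>x\<bar> ^ 5 / 120 \<le> sin x" "sin x \<le> x - x ^ 3 / 6 + \<bar>x\<bar> ^ 5 / 120"
proof -
  have "(\<Sum>m<5. sin_coeff m * x ^ m) = x - x ^ 3 / 6"
    by (simp add: lessThan_nat_numeral sin_coeff_def fact_numeral)
  moreover have "inverse (fact 5) * \<bar>x\<bar> ^ 5 = \<bar>x\<bar> ^ 5 / (120::real)"
    by (simp add: fact_numeral field_simps)
  ultimately have "\<bar>sin x - (x - x ^ 3 / 6)\<bar> \<le> \<bar>x\<bar> ^ 5 / 120"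
    using Maclaurin_sin_bound[of x 5] by (simp only:)
  then show "x - x ^ 3 / 6 - \<bar>x\<bar> ^ 5 / 120 \<le> sin x" "sin x \<le> x - x ^ 3 / 6 + \<bar>x\<bar> ^ 5 / 120"
    by linarith+
qed

lemma sqrt2_bounds: "1.4142 \<le> sqrt (2::real)" "sqrt (2::real) \<le> 1.4143"
proof -
  show "1.4142 \<le> sqrt (2::real)"
    by (rule real_le_rsqrt) (simp add: power2_eq_square)
  have "sqrt (2::real) \<le> sqrt (1.4143\<^sup>2)"
    by (rule real_sqrt_le_mono) (simp add: power2_eq_square)
  then show "sqrt (2::real) \<le> 1.4143"
    by simp
qed

lemma ln_1_6_ge: "0.4554 \<le> ln (1.6::real)"
proof -
  define t :: real where "t = 0.4554 / 8"
  have "exp t \<le> 1 + t + t\<^sup>2"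
    using exp_bound[of t] unfolding t_def by simp
  also have "\<dots> \<le> 1.0602"
    unfolding t_def by (simp add: power2_eq_square)
  finally have "exp t ^ 8 \<le> 1.0602 ^ 8"
    by (intro power_mono) auto
  also have "\<dots> \<le> 1.6"
    by (simp add: power_divide)
  finally have "exp (8 * t) \<le> 1.6"
    by (simp add: exp_of_nat_mult[of 8 t, simplified])
  then show ?thesis
    unfolding t_def by (subst ln_ge_iff) auto
qed

lemma cot_3pi_8_ge: "0.414 \<le> cos (3 * pi / 8) / sin (3 * pi / 8)"
proof -
  define a where "a = pi / 8"
  have "cos a > 0"
    unfolding a_def by (intro cos_gt_zero) auto
  have "sin (2 * a) = sqrt 2 / 2" "cos (2 * a) = sqrt 2 / 2"
    unfolding a_def using sin_45 cos_45 by simp_all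
  then have double: "2 * sin a * cos a = sqrt 2 / 2" "2 * (cos a)\<^sup>2 = 1 + sqrt 2 / 2"
    unfolding sin_double cos_double_cos by simp_all
  have "cos (3 * pi / 8) / sin (3 * pi / 8) = sin a / cos a"
    unfolding a_def using cos_sin_eq[of "3 * pi / 8"] sin_cos_eq[of "3 * pi / 8"] by simp
  also have "\<dots> = (2 * sin a * cos a) / (2 * (cos a)\<^sup>2)"
    using \<open>cos a > 0\<close> by (simp add: power2_eq_square)
  also have "\<dots> = sqrt 2 / (2 + sqrt 2)"
    unfolding double by (simp add: field_simps)
  finally have "cos (3 * pi / 8) / sin (3 * pi / 8) = sqrt 2 / (2 + sqrt 2)" .
  moreover have "0.414 \<le> sqrt 2 / (2 + sqrt (2::real))"
    using sqrt2_bounds by (simp add: field_simps)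
  ultimately show ?thesis
    by simp
qed

lemma x_cos_le_sin:
  assumes "0 \<le> x" "x \<le> pi / 2"
  shows "x * cos x \<le> sin x"
proof -
  have "(\<lambda>t. sin t - t * cos t) 0 \<le> (\<lambda>t. sin t - t * cos t) x"
  proof (rule DERIV_nonneg_imp_nondecreasing[OF assms(1)])
    fix t assume "0 \<le> t" "t \<le> x"
    with assms have "t * sin t \<ge> 0"
      by (simp add: sin_ge_zero)
    then show "\<exists>y. ((\<lambda>t. sin t - t * cos t) has_real_derivative y) (at t) \<and> 0 \<le> y"
      by (intro exI[of _ "t * sin t"]) (auto intro!: derivative_eq_intros)
  qed
  then show ?thesis
    by simp
qed

lemma sin_5_ge_sin_3:
  assumes "0 < y" "y \<le> pi / 32"
  shows "1.6 * sin (3 * y) \<le> sin (5 * y)"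
proof -
  have "y \<le> 0.0982"
    using assms pi_approx by simp
  then have "y\<^sup>2 \<le> 0.0982\<^sup>2"
    using assms by (intro power_mono) auto
  then have y2: "y\<^sup>2 \<le> 0.00965"
    by (simp add: power2_eq_square)
  then have "y\<^sup>2 * y\<^sup>2 \<le> 0.00965 * y\<^sup>2"
    by (intro mult_right_mono) auto
  then have "y ^ 4 \<le> 0.00965 * y\<^sup>2"
    by (simp add: power4_eq_xxxx power2_eq_square)
  with y2 assms have "0 \<le> y * (1/5 - 409/30 * y\<^sup>2 - 17569/600 * y ^ 4)"
    by simp
  also have "y * (1/5 - 409/30 * y\<^sup>2 - 17569/600 * y ^ 4)
      = (5*y - (5*y)^3/6 - \<bar>5*y\<bar>^5/120) - 1.6 * (3*y - (3*y)^3/6 + \<bar>3*y\<bar>^5/120)"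
    using assms by (simp add: abs_mult power_mult_distrib) (simp add: field_simps eval_nat_numeral)
  finally have "1.6 * (3*y - (3*y)^3/6 + \<bar>3*y\<bar>^5/120) \<le> 5*y - (5*y)^3/6 - \<bar>5*y\<bar>^5/120"
    by simp
  moreover have "1.6 * sin (3 * y) \<le> 1.6 * (3*y - (3*y)^3/6 + \<bar>3*y\<bar>^5/120)"
    using sin_taylor_bounds(2)[of "3 * y"] by simp
  ultimately show ?thesis
    using sin_taylor_bounds(1)[of "5 * y"] by linarith
qed

lemma log_dirichlet_at_3_8:
  assumes "q \<ge> 3"
  defines "y \<equiv> pi / (8 * real q)"
  shows "log_dirichlet q (3 / (8 * real q)) - log_dirichlet q (3 / (8 * real q) - 1 / real q)
           = ln (sin (5 * y) / sin (3 * y))"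
    and "log_dirichlet' q (3 / (8 * real q))
           = pi * (real q * (cos (3 * pi / 8) / sin (3 * pi / 8)) - cos (3 * y) / sin (3 * y))"
proof -
  have q: "real q \<ge> 3"
    using assms(1) by simp
  then have y: "0 < y" "y \<le> pi / 24"
    unfolding y_def by (auto simp: field_simps)
  have qy: "real q * (3 * y) = 3 * pi / 8" "real q * (5 * y) = pi - 3 * pi / 8"
    unfolding y_def using q by (simp_all add: field_simps)
  have sin_pos: "sin (3 * y) > 0" "sin (5 * y) > 0" "sin (3 * pi / 8) > 0"
    using y by (auto intro!: sin_gt_zero)
  have D3_sin: "dirichlet q (3 * y) * sin (3 * y) = sin (3 * pi / 8)"
    using dirichlet_mult_sin[of q "3 * y"] unfolding qy .
  then have D3: "dirichlet q (3 * y) = sin (3 * pi / 8) / sin (3 * y)"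
    using sin_pos by (simp add: field_simps)
  have D5: "dirichlet q (5 * y) = sin (3 * pi / 8) / sin (5 * y)"
    using dirichlet_mult_sin[of q "5 * y"] sin_pos unfolding qy sin_pi_minus by (simp add: field_simps)
  have arg3: "pi * (3 / (8 * real q)) = 3 * y" and arg5: "pi * (3 / (8 * real q) - 1 / real q) = - (5 * y)"
    unfolding y_def using q by (simp_all add: field_simps)
  show "log_dirichlet q (3 / (8 * real q)) - log_dirichlet q (3 / (8 * real q) - 1 / real q)
      = ln (sin (5 * y) / sin (3 * y))"
    unfolding log_dirichlet_def arg3 arg5 dirichlet_minus D3 D5 using sin_pos by (simp add: ln_div)
  have "dirichlet' q (3 * y) * sin (3 * y) + dirichlet q (3 * y) * cos (3 * y) = real q * cos (3 * pi / 8)"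
    using dirichlet'_identity[of q "3 * y"] unfolding qy .
  then have D'3: "dirichlet' q (3 * y) = (real q * cos (3 * pi / 8) - dirichlet q (3 * y) * cos (3 * y)) / sin (3 * y)"
    using sin_pos by (simp add: field_simps)
  have "dirichlet q (3 * y) > 0"
    using D3 sin_pos by simp
  then have "pi * dirichlet' q (3 * y) / dirichlet q (3 * y)
      = pi * (real q * cos (3 * pi / 8) / (dirichlet q (3 * y) * sin (3 * y)) - cos (3 * y) / sin (3 * y))"
    unfolding D'3 using sin_pos by (simp add: field_simps)
  then show "log_dirichlet' q (3 / (8 * real q))
      = pi * (real q * (cos (3 * pi / 8) / sin (3 * pi / 8)) - cos (3 * y) / sin (3 * y))"
    unfolding log_dirichlet'_def arg3 D3_sin by simp
qed

lemma log_dirichlet_gap_ge_4: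
  assumes "q \<ge> 4"
  defines "\<theta> \<equiv> 3 / (8 * real q)"
  shows "log_dirichlet q (\<theta> - 1 / (real q)\<^sup>2) - log_dirichlet q \<theta>
           - log_dirichlet' q \<theta> / ((real q)\<^sup>2 * (real q - 1))
         < log_dirichlet q \<theta> - log_dirichlet q (\<theta> - 1 / real q)"
proof -
  define y where "y = pi / (8 * real q)"
  have q: "real q \<ge> 4" "q \<ge> 1" and "q \<ge> 3"
    using assms(1) by simp_all
  have \<theta>: "0 < \<theta>" "\<theta> < 1 / real q"
    unfolding \<theta>_def using q by (auto simp: field_simps)
  have y: "0 < y" "y \<le> pi / 32"
    unfolding y_def using q by (auto simp: field_simps)
  have "1 / (real q)\<^sup>2 \<le> 1 / real q"
    using q by (intro divide_left_mono) (auto simp: power2_eq_square)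
  then have "log_dirichlet' q \<theta> * (\<theta> - (\<theta> - 1 / (real q)\<^sup>2))
      \<le> log_dirichlet q \<theta> - log_dirichlet q (\<theta> - 1 / (real q)\<^sup>2)"
    using \<theta> q by (intro increment_ge_of_deriv_ge[where f' = "log_dirichlet' q"]
        log_dirichlet_has_derivative log_dirichlet'_antimono) auto
  moreover have "- log_dirichlet' q \<theta> / (real q)\<^sup>2 - log_dirichlet' q \<theta> / ((real q)\<^sup>2 * (real q - 1))
      = - log_dirichlet' q \<theta> / (real q * (real q - 1))"
    using q by (simp add: field_simps power2_eq_square)
  moreover have "- log_dirichlet' q \<theta> / (real q * (real q - 1)) < ln (sin (5 * y) / sin (3 * y))"
  proof -
    have "0 < 3 * y" "3 * y \<le> pi / 2"
      using y by auto
    then have "cos (3 * y) / sin (3 * y) \<le> 1 / (3 * y)"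
      using x_cos_le_sin[of "3 * y"] sin_gt_zero[of "3 * y"] by (simp add: field_simps)
    then have "pi * (cos (3 * y) / sin (3 * y)) \<le> pi * (1 / (3 * y))"
      by (intro mult_left_mono) auto
    moreover have "pi * real q * 0.414 \<le> pi * real q * (cos (3 * pi / 8) / sin (3 * pi / 8))"
      using cot_3pi_8_ge by (intro mult_left_mono) auto
    ultimately have "- log_dirichlet' q \<theta> \<le> pi * (1 / (3 * y)) - pi * real q * 0.414"
      unfolding \<theta>_def log_dirichlet_at_3_8(2)[OF \<open>q \<ge> 3\<close>, folded y_def]
      by (simp add: algebra_simps)
    also have "\<dots> = real q * (8 / 3 - 0.414 * pi)"
      unfolding y_def by (simp add: field_simps)
    finally have "- log_dirichlet' q \<theta> / (real q * (real q - 1))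
        \<le> real q * (8 / 3 - 0.414 * pi) / (real q * (real q - 1))"
      using q by (intro divide_right_mono) auto
    also have "\<dots> = (8 / 3 - 0.414 * pi) / (real q - 1)"
      using q by simp
    also have "\<dots> \<le> (8 / 3 - 0.414 * pi) / 3"
      using q pi_less_4 by (intro divide_left_mono) auto
    also have "\<dots> < 0.4554"
      using pi_approx by simp
    also have "\<dots> \<le> ln 1.6"
      by (rule ln_1_6_ge)
    also have "\<dots> \<le> ln (sin (5 * y) / sin (3 * y))"
      using sin_5_ge_sin_3[OF y] sin_gt_zero[of "3 * y"] y by (simp add: field_simps)
    finally show ?thesis .
  qed
  moreover have "ln (sin (5 * y) / sin (3 * y)) = log_dirichlet q \<theta> - log_dirichlet q (\<theta> - 1 / real q)"
    unfolding \<theta>_def y_def using log_dirichlet_at_3_8(1)[OF \<open>q \<ge> 3\<close>] by simp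
  ultimately show ?thesis
    by simp
qed

lemma dirichlet_3: "dirichlet 3 x = 1 + 2 * cos (2 * x)"
  by (simp add: dirichlet_def lessThan_nat_numeral)

lemma dirichlet'_3: "dirichlet' 3 x = - 4 * sin (2 * x)"
  by (simp add: dirichlet'_def lessThan_nat_numeral)

lemma log_dirichlet_gap_3:
  "log_dirichlet 3 (1/8 - 1/9) - log_dirichlet 3 (1/8) - log_dirichlet' 3 (1/8) / 18
     < log_dirichlet 3 (1/8) - log_dirichlet 3 (1/8 - 1/3)"
proof -
  define A B C t where "A = 1 + 2 * cos (pi / 36)" and "B = 1 + sqrt 2"
    and "C = 1 + 2 * cos (5 * pi / 12)" and "t = 2 * sqrt 2 * pi / (B * 18)"
  have "2 * (pi * (1/8 - 1/9)) = pi / 36" "2 * (pi * (1/8)) = pi / 4"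
    "2 * (pi * (1/8 - 1/3)) = - (5 * pi / 12)"
    by simp_all
  then have point_values: "log_dirichlet 3 (1/8 - 1/9) = ln A" "log_dirichlet 3 (1/8) = ln B"
    "log_dirichlet 3 (1/8 - 1/3) = ln C" "- log_dirichlet' 3 (1/8) / 18 = t"
    unfolding log_dirichlet_def log_dirichlet'_def dirichlet_3 dirichlet'_3 A_def B_def C_def t_def
    by (simp_all add: cos_45 sin_45 field_simps)
  have sqrt2: "1.4142 \<le> sqrt (2::real)" "sqrt (2::real) \<le> 1.4143"
    by (fact sqrt2_bounds)+
  have pi: "3.141592653588 \<le> pi" "pi \<le> 3.1415926535899"
    by (fact pi_approx)+
  have B: "B > 0"
    unfolding B_def by (simp add: add_pos_nonneg)
  have "sqrt 2 / B \<le> 0.5859"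
    unfolding B_def using sqrt2 by (simp add: field_simps)
  then have "pi * (sqrt 2 / B) \<le> 3.1416 * 0.5859"
    using pi B by (intro mult_mono) auto
  moreover have "t = pi * (sqrt 2 / B) / 9"
    unfolding t_def by (simp add: field_simps)
  ultimately have "t \<le> 3.1416 * 0.5859 / 9"
    by (metis divide_right_mono zero_le_numeral)
  moreover have "0 \<le> t"
    unfolding t_def using B by simp
  ultimately have t: "0 \<le> t" "t \<le> 0.2046"
    by simp_all
  have "exp t \<le> 1 + t + t\<^sup>2"
    using exp_bound[of t] t by simp
  also have "\<dots> \<le> 1 + 0.2046 + 0.2046\<^sup>2"
    using t by (intro add_mono power_mono) auto
  finally have exp_t: "exp t \<le> 1.2465"
    by (simp add: power2_eq_square)
  have A: "0 < A" "A \<le> 3"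
    unfolding A_def using cos_gt_zero[of "pi / 36"] by auto
  have "cos (5 * pi / 12) = sin (pi / 12)"
    using cos_sin_eq[of "5 * pi / 12"] by simp
  then have C: "0 < C" "C \<le> 1 + pi / 6"
    unfolding C_def using sin_gt_zero[of "pi / 12"] sin_x_le_x[of "pi / 12"] by auto
  have "A * C * exp t \<le> 3 * (1 + pi / 6) * 1.2465"
    using A C exp_t by (intro mult_mono) auto
  also have "\<dots> < 3 + 2 * sqrt 2"
    using pi sqrt2 by simp
  also have "\<dots> = B\<^sup>2"
    unfolding B_def by (simp add: power2_eq_square algebra_simps)
  finally have "ln (A * C * exp t) < ln (B\<^sup>2)"
    using A C B by simp
  then have "ln A + ln C + t < 2 * ln B"
    using A C B by (simp add: ln_mult ln_realpow)
  then show ?thesis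
    unfolding point_values[symmetric] by linarith
qed

lemma log_dirichlet_gap:
  assumes "q \<ge> 3"
  defines "\<theta> \<equiv> 3 / (8 * real q)"
  shows "log_dirichlet q (\<theta> - 1 / (real q)\<^sup>2) - log_dirichlet q \<theta>
           - log_dirichlet' q \<theta> / ((real q)\<^sup>2 * (real q - 1))
         < log_dirichlet q \<theta> - log_dirichlet q (\<theta> - 1 / real q)"
proof (cases "q = 3")
  case True
  then show ?thesis
    using log_dirichlet_gap_3 unfolding \<theta>_def by (simp add: power2_eq_square)
next
  case False
  with assms show ?thesis
    using log_dirichlet_gap_ge_4 by simp
qed

section \<open>The cohomological equation on the arc\<close>

lemma periodic_add_of_int:
  fixes f :: "real \<Rightarrow> 'a"
  assumes "\<And>x. f (x + 1) = f x"
  shows "f (x + of_int k) = f x"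
proof (induction k rule: int_induct[where k = 0])
  case (step1 i)
  then show ?case
    using assms[of "x + of_int i"] by (simp add: add.assoc)
next
  case (step2 i)
  then show ?case
    using assms[of "x + of_int i - 1"] by (simp add: algebra_simps)
qed simp

(* The cohomological equation on C_lam, with psi (T x) written as psi (q x), which is the same
   for 1-periodic psi. *)
definition coboundary_on_arc :: "nat \<Rightarrow> real \<Rightarrow> real \<Rightarrow> bool" where
  "coboundary_on_arc q c lam \<longleftrightarrow> (\<exists>(\<psi>::real \<Rightarrow> real) \<beta> M.
     (\<forall>x. \<psi> (x + 1) = \<psi> x) \<and> (\<forall>x y. \<bar>\<psi> x - \<psi> y\<bar> \<le> M * \<bar>x - y\<bar>) \<and>
     (\<forall>t\<in>{0..1 / real q}. fc q c (lam + t) + \<psi> (lam + t) - \<psi> (real q * (lam + t)) = \<beta>))"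

lemma pre_sturmian_imp_coboundary_on_arc:
  assumes "pre_sturmian q c lam"
  shows "coboundary_on_arc q c lam"
proof -
  obtain \<psi> \<beta> L where lip: "\<And>x y. \<bar>\<psi> x - \<psi> y\<bar> \<le> L * tdist x y"
    and eq: "\<And>x. x \<in> Carc q lam \<Longrightarrow> fc q c x + \<psi> x - \<psi> (Tmap q x) = \<beta>"
    using assms unfolding pre_sturmian_def tlipschitz_on_def by blast
  have per: "\<psi> (x + 1) = \<psi> x" for x
  proof -
    have "tdist (x + 1) x = 0"
      unfolding tdist_def by simp
    then show ?thesis
      using lip[of "x + 1" x] by simp
  qed
  have lip_abs: "\<bar>\<psi> x - \<psi> y\<bar> \<le> \<bar>L\<bar> * \<bar>x - y\<bar>" for x y
  proof -
    have "0 \<le> tdist x y" "tdist x y \<le> \<bar>x - y\<bar>"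
      unfolding tdist_def using round_diff_minimal[of "x - y" 0] by simp_all
    then have "L * tdist x y \<le> \<bar>L\<bar> * \<bar>x - y\<bar>"
      by (metis abs_ge_self abs_ge_zero mult_mono)
    then show ?thesis
      using lip[of x y] by linarith
  qed
  have eq_arc: "fc q c (lam + t) + \<psi> (lam + t) - \<psi> (real q * (lam + t)) = \<beta>"
    if "t \<in> {0..1 / real q}" for t
  proof -
    have "lam + t \<in> Carc q lam"
      unfolding Carc_def using that by (intro CollectI exI[of _ 0]) simp
    moreover have "\<psi> (Tmap q (lam + t)) = \<psi> (real q * (lam + t))"
      unfolding Tmap_def frac_def
      using periodic_add_of_int[of \<psi>, OF per, of _ "- \<lfloor>real q * (lam + t)\<rfloor>"] by simp
    ultimately show ?thesis
      using eq by metis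
  qed
  show ?thesis
    unfolding coboundary_on_arc_def
    by (intro exI[of _ \<psi>] exI[of _ \<beta>] exI[of _ "\<bar>L\<bar>"] conjI allI ballI per lip_abs eq_arc)
qed

lemma coboundary_on_arc_reflect:
  assumes "coboundary_on_arc q c lam"
  shows "coboundary_on_arc q (- c) (- lam - 1 / real q)"
proof -
  obtain \<psi> \<beta> M where per: "\<And>x. \<psi> (x + 1) = \<psi> x"
    and lip: "\<And>x y. \<bar>\<psi> x - \<psi> y\<bar> \<le> M * \<bar>x - y\<bar>"
    and eq: "\<And>t. t \<in> {0..1 / real q} \<Longrightarrow> fc q c (lam + t) + \<psi> (lam + t) - \<psi> (real q * (lam + t)) = \<beta>"
    using assms unfolding coboundary_on_arc_def by blast
  have per': "\<psi> (- (x + 1)) = \<psi> (- x)" for x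
    using per[of "- x - 1"] by simp
  have lip': "\<bar>\<psi> (- x) - \<psi> (- y)\<bar> \<le> M * \<bar>x - y\<bar>" for x y
    using lip[of "- x" "- y"] by (simp add: abs_minus_commute)
  have eq': "fc q (- c) (- lam - 1 / real q + t) + \<psi> (- (- lam - 1 / real q + t))
      - \<psi> (- (real q * (- lam - 1 / real q + t))) = \<beta>" if "t \<in> {0..1 / real q}" for t
  proof -
    have arg: "- lam - 1 / real q + t = - (lam + (1 / real q - t))"
      by simp
    have "1 / real q - t \<in> {0..1 / real q}"
      using that by simp
    then show ?thesis
      unfolding arg minus_minus mult_minus_right fc_reflect using eq by simp
  qed
  show ?thesis
    unfolding coboundary_on_arc_def
    by (intro exI[of _ "\<lambda>x. \<psi> (- x)"] exI[of _ \<beta>] exI[of _ M] conjI allI ballI per' lip' eq')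
qed

lemma arc_equation_on_unit_interval:
  fixes \<psi> :: "real \<Rightarrow> real"
  assumes per: "\<And>x. \<psi> (x + 1) = \<psi> x"
    and eq: "\<And>t. t \<in> {0..1 / real q} \<Longrightarrow> fc q c (lam + t) + \<psi> (lam + t) - \<psi> (real q * (lam + t)) = \<beta>"
    and "q \<ge> 1" "0 \<le> w" "w \<le> 1"
  shows "\<psi> (real q * lam + (frac ((1 - real q) * lam) + w / real q))
           = \<psi> (real q * lam + w) - fc q c (lam + w / real q) + \<beta>"
proof -
  have "\<psi> (real q * lam + (frac ((1 - real q) * lam) + w / real q))
      = \<psi> (lam + w / real q + of_int (- \<lfloor>(1 - real q) * lam\<rfloor>))"
    unfolding frac_def by (simp add: algebra_simps)
  also have "\<dots> = \<psi> (lam + w / real q)"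
    using per by (rule periodic_add_of_int)
  also have "\<dots> = \<psi> (real q * (lam + w / real q)) - fc q c (lam + w / real q) + \<beta>"
    using eq[of "w / real q"] assms(4,5) by (simp add: divide_right_mono)
  also have "real q * (lam + w / real q) = real q * lam + w"
    using assms(3) by (simp add: field_simps)
  finally show ?thesis .
qed

lemma fc_on_arc_eq_log_dirichlet:
  assumes "q \<ge> 1" "0 < lam + 1 / real q + c" "lam + 1 / real q + c < 1 / real q" "0 \<le> w" "w \<le> 1"
  shows "fc q c (lam + w / real q) = log_dirichlet q (lam + c + w / real q)"
proof -
  have "0 \<le> w / real q" "w / real q \<le> 1 / real q"
    using assms by (auto simp: divide_right_mono)
  then have "\<bar>lam + w / real q + c\<bar> < 1 / real q"
    using assms(2,3) by (simp add: abs_less_iff)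
  then show ?thesis
    using fc_eq_log_dirichlet[OF assms(1)] by (simp add: algebra_simps)
qed

lemma log_dirichlet_rescaled_slope:
  assumes "q \<ge> 1" "- 1 / real q < s" "s < 0" "0 \<le> a" "a \<le> b" "b \<le> 1"
  shows "log_dirichlet' q (s + 1 / real q) / real q * (b - a)
           \<le> log_dirichlet q (s + b / real q) - log_dirichlet q (s + a / real q)"
proof (rule increment_ge_of_deriv_ge[where f' = "\<lambda>w. log_dirichlet' q (s + w / real q) / real q"])
  fix w assume w: "a \<le> w" "w \<le> b"
  then have "0 \<le> w / real q" "w / real q \<le> 1 / real q"
    using assms by (auto simp: divide_right_mono)
  then have arg: "- 1 / real q < s + w / real q" "s + w / real q \<le> s + 1 / real q" "s + 1 / real q < 1 / real q"
    using assms by auto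
  have "((\<lambda>w. log_dirichlet q (s + w / real q)) has_real_derivative
      log_dirichlet' q (s + w / real q) * (1 / real q)) (at w)"
    by (rule DERIV_chain2[where g = "\<lambda>w. s + w / real q", OF log_dirichlet_has_derivative])
      (use assms(1) arg in \<open>auto intro!: derivative_eq_intros\<close>)
  then show "((\<lambda>w. log_dirichlet q (s + w / real q)) has_real_derivative
      log_dirichlet' q (s + w / real q) / real q) (at w)"
    by simp
  show "log_dirichlet' q (s + 1 / real q) / real q \<le> log_dirichlet' q (s + w / real q) / real q"
    using arg assms(1) by (intro divide_right_mono log_dirichlet'_antimono) auto
qed (fact assms)

lemma log_dirichlet_rescaled_concave:
  assumes "q \<ge> 1" "- 1 / real q < s" "s < 0" "0 \<le> a" "a \<le> b" "0 \<le> d" "b + d \<le> 1"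
  shows "log_dirichlet q (s + (b + d) / real q) - log_dirichlet q (s + b / real q)
           \<le> log_dirichlet q (s + (a + d) / real q) - log_dirichlet q (s + a / real q)"
proof -
  have scaled: "0 \<le> a / real q" "a / real q \<le> b / real q" "0 \<le> d / real q"
    "b / real q + d / real q \<le> 1 / real q"
    using assms by (auto simp: divide_right_mono add_divide_distrib[symmetric])
  moreover have "- 1 / real q < s + a / real q" "s + b / real q + d / real q < 1 / real q"
    using assms(2,3) scaled by linarith+
  ultimately have "log_dirichlet q (s + b / real q + d / real q) - log_dirichlet q (s + b / real q)
      \<le> log_dirichlet q (s + a / real q + d / real q) - log_dirichlet q (s + a / real q)"
    using assms by (intro log_dirichlet_increment_antimono) (auto simp: add_divide_distrib)
  then show ?thesis
    by (simp add: add_divide_distrib add.assoc)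
qed

lemma coboundary_on_arc_log_dirichlet_ineq:
  assumes "q \<ge> 2" "coboundary_on_arc q c lam"
  defines "\<theta> \<equiv> lam + 1 / real q + c"
  assumes "0 < \<theta>" "\<theta> < 1 / real q"
  shows "log_dirichlet q \<theta> - log_dirichlet q (\<theta> - 1 / real q)
           \<le> log_dirichlet q (\<theta> - 1 / (real q)\<^sup>2) - log_dirichlet q \<theta>
              - log_dirichlet' q \<theta> / ((real q)\<^sup>2 * (real q - 1))"
proof -
  define Q s where "Q = real q" and "s = \<theta> - 1 / real q"
  define G where "G w = log_dirichlet q (s + w / Q)" for w
  have Q: "Q > 1" "q \<ge> 1"
    unfolding Q_def using assms(1) by simp_all
  have s: "- 1 / real q < s" "s < 0"
    unfolding s_def using assms(4,5) by simp_all
  obtain \<psi> \<beta> M where per: "\<And>x. \<psi> (x + 1) = \<psi> x"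
    and lip: "\<And>x y. \<bar>\<psi> x - \<psi> y\<bar> \<le> M * \<bar>x - y\<bar>"
    and eq: "\<And>t. t \<in> {0..1 / real q} \<Longrightarrow> fc q c (lam + t) + \<psi> (lam + t) - \<psi> (real q * (lam + t)) = \<beta>"
    using assms(2) unfolding coboundary_on_arc_def by blast
  \<comment> \<open>For \<open>x = lam + w / q\<close> with \<open>w \<in> [0, 1]\<close>: \<open>Psi w = \<psi> (q x)\<close> and \<open>G w = f\<^sub>c x\<close>.\<close>
  define Psi where "Psi w = \<psi> (Q * lam + w)" for w
  have per_Psi: "Psi (x + 1) = Psi x" for x
    unfolding Psi_def using per[of "Q * lam + x"] by (simp add: add.assoc)
  have lip_Psi: "\<bar>Psi x - Psi y\<bar> \<le> M * \<bar>x - y\<bar>" for x y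
    unfolding Psi_def using lip[of "Q * lam + x" "Q * lam + y"] by simp
  have eq_G: "Psi (frac ((1 - Q) * lam) + w / Q) = Psi w - G w + \<beta>" if "0 \<le> w" "w \<le> 1" for w
    using arc_equation_on_unit_interval[OF per eq Q(2) that]
      fc_on_arc_eq_log_dirichlet[OF Q(2) assms(4,5)[unfolded \<theta>_def] that]
    unfolding Psi_def G_def Q_def s_def \<theta>_def by (simp add: algebra_simps)
  have "G 1 - G 0 \<le> G (1 - 1 / Q) - G 1 + (- log_dirichlet' q \<theta> / Q) / (Q * (Q - 1))"
  proof (rule coboundary_increment_bound[where Psi = Psi and G = G and K = "- log_dirichlet' q \<theta> / Q",
        OF Q(1) _ _ per_Psi lip_Psi eq_G])
    show "0 \<le> frac ((1 - Q) * lam)" "frac ((1 - Q) * lam) < 1"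
      by (simp_all add: frac_lt_1)
    show "- (- log_dirichlet' q \<theta> / Q) * (b - a) \<le> G b - G a" if "0 \<le> a" "a \<le> b" "b \<le> 1" for a b
      using log_dirichlet_rescaled_slope[OF Q(2) s that] unfolding G_def Q_def s_def by simp
    show "G (b + d) - G b \<le> G (a + d) - G a" if "0 \<le> a" "a \<le> b" "0 \<le> d" "b + d \<le> 1" for a b d
      using log_dirichlet_rescaled_concave[OF Q(2) s that] unfolding G_def Q_def by simp
  qed
  moreover have "G 1 = log_dirichlet q \<theta>" "G 0 = log_dirichlet q (\<theta> - 1 / real q)"
    "G (1 - 1 / Q) = log_dirichlet q (\<theta> - 1 / (real q)\<^sup>2)"
    unfolding G_def s_def Q_def using Q by (simp_all add: field_simps power2_eq_square)
  moreover have "(- log_dirichlet' q \<theta> / Q) / (Q * (Q - 1))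
      = - (log_dirichlet' q \<theta> / ((real q)\<^sup>2 * (real q - 1)))"
    unfolding Q_def power2_eq_square by (simp add: mult.assoc)
  ultimately show ?thesis
    by linarith
qed

lemma coboundary_on_arc_theta_gt:
  assumes "q \<ge> 3" "coboundary_on_arc q c lam"
    and "0 < lam + 1 / real q + c" "lam + 1 / real q + c < 1 / real q"
  shows "3 / (8 * real q) < lam + 1 / real q + c"
proof (rule ccontr)
  define \<theta> \<theta>' where "\<theta> = lam + 1 / real q + c" and "\<theta>' = 3 / (8 * real q)"
  assume "\<not> 3 / (8 * real q) < lam + 1 / real q + c"
  then have "\<theta> \<le> \<theta>'"
    unfolding \<theta>_def \<theta>'_def by simp
  have q: "q \<ge> 1" "q \<ge> 2" "real q \<ge> 3"
    using assms(1) by simp_all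
  have \<theta>: "0 < \<theta>" "\<theta>' < 1 / real q"
    unfolding \<theta>_def \<theta>'_def using assms(3) q by (simp_all add: field_simps)
  have "1 / (real q)\<^sup>2 \<le> 1 / real q"
    using q by (intro divide_left_mono) (auto simp: power2_eq_square)
  then have "log_dirichlet q \<theta>' - log_dirichlet q (\<theta>' - 1 / (real q)\<^sup>2)
        \<le> log_dirichlet q \<theta> - log_dirichlet q (\<theta> - 1 / (real q)\<^sup>2)"
    and "log_dirichlet q \<theta>' - log_dirichlet q (\<theta>' - 1 / real q)
        \<le> log_dirichlet q \<theta> - log_dirichlet q (\<theta> - 1 / real q)"
    using log_dirichlet_increment_antimono[OF q(1), of "\<theta> - 1 / (real q)\<^sup>2" "\<theta>' - 1 / (real q)\<^sup>2"
        "1 / (real q)\<^sup>2"]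
      log_dirichlet_increment_antimono[OF q(1), of "\<theta> - 1 / real q" "\<theta>' - 1 / real q" "1 / real q"]
      \<theta> \<open>\<theta> \<le> \<theta>'\<close> by simp_all
  moreover have "log_dirichlet' q \<theta>' \<le> log_dirichlet' q \<theta>"
    using \<theta> \<open>\<theta> \<le> \<theta>'\<close> q by (intro log_dirichlet'_antimono) auto
  then have "- log_dirichlet' q \<theta> / ((real q)\<^sup>2 * (real q - 1))
      \<le> - log_dirichlet' q \<theta>' / ((real q)\<^sup>2 * (real q - 1))"
    using q by (intro divide_right_mono) auto
  ultimately show False
    using coboundary_on_arc_log_dirichlet_ineq[OF q(2) assms(2-4)] log_dirichlet_gap[OF assms(1)]
    unfolding \<theta>_def[symmetric] \<theta>'_def[symmetric] by simp
qed

theorem lemma5p7: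
  fixes q :: nat and c lam :: real
  assumes "q \<ge> 3"
    and "- 1 / real q - c < lam" and "lam < - c"
    and "pre_sturmian q c lam"
  shows "3 / (8 * real q) < lam + 1 / real q + c \<and> lam + 1 / real q + c < 5 / (8 * real q)"
proof
  have arc: "coboundary_on_arc q c lam"
    using assms(4) by (rule pre_sturmian_imp_coboundary_on_arc)
  show "3 / (8 * real q) < lam + 1 / real q + c"
    using assms(2,3) by (intro coboundary_on_arc_theta_gt[OF assms(1) arc]) (simp_all add: field_simps)
  have "3 / (8 * real q) < (- lam - 1 / real q) + 1 / real q + - c"
    using assms(2,3) by (intro coboundary_on_arc_theta_gt[OF assms(1) coboundary_on_arc_reflect[OF arc]])
      (simp_all add: field_simps)
  moreover have "5 / (8 * real q) = 1 / real q - 3 / (8 * real q)"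
    using assms(1) by (simp add: field_simps)
  ultimately show "lam + 1 / real q + c < 5 / (8 * real q)"
    by linarith
qed

end
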